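(* There exists a $(\circ,\wedge,\mathsf{A})$-algebra that is representable by partial functions and atomic, but has no atomic representation (equivalently, no complete representation) by partial functions. For instance, let the base be $\{p\}\sqcup\mathbb{N}_\infty$ with $\mathbb{N}_\infty=\mathbb{N}\cup\{\infty\}$, let $\mathcal{S}$ be the set of subsets of $\mathbb{N}_\infty$ that are either finite and omit $\infty$, or cofinite and contain $\infty$, and let $\mathfrak{F}$ consist of the identity functions restricted to $A\cup B$ with $A\subseteq\{p\}$, $B\in\mathcal{S}$, together with the function $f=\{(p,\infty)\}$. Then $\mathfrak{F}$ is closed under composition, intersection and antidomain, is atomic, and has no complete representation by partial functions.
   Context: A $(\circ,\wedge,\mathsf{A})$-algebra is a set with two binary operations $\circ,\wedge$ and one unary operation $\mathsf{A}$. An algebra of partial functions of this signature is a set of partial functions, with base $X$ the union of all their domains and ranges, closed under: composition $f\circ g=\{(x,z)\mid \exists y\,(x,y)\in f,(y,z)\in g\}$; intersection; antidomain $\mathsf{A}(f)=\{(x,x)\mid x\in X, x\notin\mathrm{dom}(f)\}$. A representation by partial functions is an isomorphism onto such an algebra. The order is $a\le b\iff a\wedge b=a$, with least element $0$. An atom is a minimal nonzero element; the algebra is atomic if every nonzero element is above an atom. A representation $\theta$ is atomic if whenever $(x,y)\in\theta(a)$ for some $a$, then $(x,y)\in\theta(b)$ for some atom $b$. It is complete if for every nonempty $S$ with $\bigwedge S$ existing, $\theta(\bigwedge S)=\bigcap\theta[S]$ (equivalently for joins and unions). *)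

theory Defs
  imports Main
begin

definition base :: "('b \<times> 'b) set set \<Rightarrow> 'b set" where
  "base F = (\<Union>f\<in>F. Domain f \<union> Range f)"

definition antidom :: "'b set \<Rightarrow> ('b \<times> 'b) set \<Rightarrow> ('b \<times> 'b) set" where
  "antidom X f = {(x, x) | x. x \<in> X \<and> x \<notin> Domain f}"

definition pfun_alg :: "('b \<times> 'b) set set \<Rightarrow> bool" where
  "pfun_alg F \<longleftrightarrow> (\<forall>f\<in>F. single_valued f)
     \<and> (\<forall>f\<in>F. \<forall>g\<in>F. f O g \<in> F \<and> f \<inter> g \<in> F)
     \<and> (\<forall>f\<in>F. antidom (base F) f \<in> F)"

definition is_alg :: "'a set \<Rightarrow> ('a \<Rightarrow> 'a \<Rightarrow> 'a) \<Rightarrow> ('a \<Rightarrow> 'a \<Rightarrow> 'a) \<Rightarrow> ('a \<Rightarrow> 'a) \<Rightarrow> bool" where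
  "is_alg S cmp meet ad \<longleftrightarrow>
     (\<forall>a\<in>S. \<forall>b\<in>S. cmp a b \<in> S \<and> meet a b \<in> S) \<and> (\<forall>a\<in>S. ad a \<in> S)"

definition is_rep :: "'a set \<Rightarrow> ('a \<Rightarrow> 'a \<Rightarrow> 'a) \<Rightarrow> ('a \<Rightarrow> 'a \<Rightarrow> 'a) \<Rightarrow> ('a \<Rightarrow> 'a)
     \<Rightarrow> ('a \<Rightarrow> ('c \<times> 'c) set) \<Rightarrow> bool" where
  "is_rep S cmp meet ad \<theta> \<longleftrightarrow>
     is_alg S cmp meet ad \<and> inj_on \<theta> S \<and> pfun_alg (\<theta> ` S)
     \<and> (\<forall>a\<in>S. \<forall>b\<in>S. \<theta> (cmp a b) = \<theta> a O \<theta> b \<and> \<theta> (meet a b) = \<theta> a \<inter> \<theta> b)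
     \<and> (\<forall>a\<in>S. \<theta> (ad a) = antidom (base (\<theta> ` S)) (\<theta> a))"

definition leq :: "('a \<Rightarrow> 'a \<Rightarrow> 'a) \<Rightarrow> 'a \<Rightarrow> 'a \<Rightarrow> bool" where
  "leq meet a b \<longleftrightarrow> meet a b = a"

definition is_zero :: "'a set \<Rightarrow> ('a \<Rightarrow> 'a \<Rightarrow> 'a) \<Rightarrow> 'a \<Rightarrow> bool" where
  "is_zero S meet z \<longleftrightarrow> z \<in> S \<and> (\<forall>b\<in>S. leq meet z b)"

definition is_atom :: "'a set \<Rightarrow> ('a \<Rightarrow> 'a \<Rightarrow> 'a) \<Rightarrow> 'a \<Rightarrow> bool" where
  "is_atom S meet a \<longleftrightarrow> a \<in> S \<and> \<not> is_zero S meet a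
     \<and> (\<forall>b\<in>S. leq meet b a \<longrightarrow> b = a \<or> is_zero S meet b)"

definition atomic_alg :: "'a set \<Rightarrow> ('a \<Rightarrow> 'a \<Rightarrow> 'a) \<Rightarrow> bool" where
  "atomic_alg S meet \<longleftrightarrow>
     (\<forall>a\<in>S. \<not> is_zero S meet a \<longrightarrow> (\<exists>b. is_atom S meet b \<and> leq meet b a))"

definition atomic_rep :: "'a set \<Rightarrow> ('a \<Rightarrow> 'a \<Rightarrow> 'a) \<Rightarrow> ('a \<Rightarrow> ('c \<times> 'c) set) \<Rightarrow> bool" where
  "atomic_rep S meet \<theta> \<longleftrightarrow>
     (\<forall>a\<in>S. \<forall>p\<in>\<theta> a. \<exists>b. is_atom S meet b \<and> p \<in> \<theta> b)"

definition is_inf :: "'a set \<Rightarrow> ('a \<Rightarrow> 'a \<Rightarrow> 'a) \<Rightarrow> 'a set \<Rightarrow> 'a \<Rightarrow> bool" where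
  "is_inf S meet T m \<longleftrightarrow> m \<in> S \<and> (\<forall>t\<in>T. leq meet m t)
     \<and> (\<forall>c\<in>S. (\<forall>t\<in>T. leq meet c t) \<longrightarrow> leq meet c m)"

definition complete_rep :: "'a set \<Rightarrow> ('a \<Rightarrow> 'a \<Rightarrow> 'a) \<Rightarrow> ('a \<Rightarrow> ('c \<times> 'c) set) \<Rightarrow> bool" where
  "complete_rep S meet \<theta> \<longleftrightarrow>
     (\<forall>T m. T \<subseteq> S \<and> T \<noteq> {} \<and> is_inf S meet T m \<longrightarrow> \<theta> m = (\<Inter>t\<in>T. \<theta> t))"

text \<open>Base {p} \<squnion> (\<nat> \<union> {\<infinity>}).\<close>
datatype pt = P | N nat | Inf

definition Ninf :: "pt set" where
  "Ninf = range N \<union> {Inf}"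

definition Sfam :: "pt set set" where
  "Sfam = {B. B \<subseteq> Ninf \<and> ((finite B \<and> Inf \<notin> B) \<or> (finite (Ninf - B) \<and> Inf \<in> B))}"

definition fP :: "(pt \<times> pt) set" where
  "fP = {(P, Inf)}"

definition Falg :: "(pt \<times> pt) set set" where
  "Falg = {Id_on (A \<union> B) | A B. A \<subseteq> {P} \<and> B \<in> Sfam} \<union> {fP}"

end

theory Submission
  imports Defs
begin

(* The obstruction to atomic and complete representations is general.
   Let theta represent an algebra S of signature (composition, meet, antidomain).
   Antidomain elements ad b are represented by restrictions of the identity, so if a
   nonzero a satisfies a ; ad b = a, every pair (x, y) of theta(a) forces the fixed
   point (y, y) into theta(ad b).  If this happens for a family T of antidomain
   elements whose meet in S is 0, then (y, y) lies in every theta(t), t in T, but not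
   in theta(0) = {}: so theta is not complete, and an atom containing (y, y) would lie
   below every t, hence below 0, so theta is not atomic either. *)

context
  fixes S :: "'a set" and cmp meet :: "'a \<Rightarrow> 'a \<Rightarrow> 'a" and ad :: "'a \<Rightarrow> 'a"
    and \<theta> :: "'a \<Rightarrow> ('c \<times> 'c) set"
  assumes rep: "is_rep S cmp meet ad \<theta>"
begin

lemma rep_inj: "inj_on \<theta> S"
  and rep_meet_closed: "a \<in> S \<Longrightarrow> b \<in> S \<Longrightarrow> meet a b \<in> S"
  and rep_ad_closed: "a \<in> S \<Longrightarrow> ad a \<in> S"
  and rep_cmp: "a \<in> S \<Longrightarrow> b \<in> S \<Longrightarrow> \<theta> (cmp a b) = \<theta> a O \<theta> b"
  and rep_meet: "a \<in> S \<Longrightarrow> b \<in> S \<Longrightarrow> \<theta> (meet a b) = \<theta> a \<inter> \<theta> b"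
  and rep_ad: "a \<in> S \<Longrightarrow> \<theta> (ad a) = antidom (base (\<theta> ` S)) (\<theta> a)"
  using rep unfolding is_rep_def is_alg_def by simp_all

lemma rep_mono:
  assumes "a \<in> S" "b \<in> S" "leq meet a b"
  shows "\<theta> a \<subseteq> \<theta> b"
proof -
  have "\<theta> a = \<theta> (meet a b)" using assms(3) unfolding leq_def by simp
  also have "\<dots> = \<theta> a \<inter> \<theta> b" using rep_meet assms(1,2) .
  finally show ?thesis by blast
qed

lemma rep_ad_diagonal:
  assumes "b \<in> S" "(x, y) \<in> \<theta> (ad b)"
  shows "x = y"
  using assms rep_ad unfolding antidom_def by auto

text \<open>The least element is represented by the empty function: it lies below
  the meet of any element with its antidomain, which has empty representation.\<close>
lemma rep_zero:
  assumes "is_zero S meet z"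
  shows "\<theta> z = {}"
proof -
  have z: "z \<in> S" using assms unfolding is_zero_def by blast
  then have c: "meet z (ad z) \<in> S" using rep_meet_closed rep_ad_closed by blast
  have "\<theta> (meet z (ad z)) = \<theta> z \<inter> antidom (base (\<theta> ` S)) (\<theta> z)"
    using z rep_meet rep_ad rep_ad_closed by simp
  also have "\<dots> = {}" unfolding antidom_def by auto
  finally have "\<theta> (meet z (ad z)) = {}" .
  moreover have "\<theta> z \<subseteq> \<theta> (meet z (ad z))"
    using rep_mono[OF z c] assms c unfolding is_zero_def by blast
  ultimately show ?thesis by blast
qed

lemma rep_fixed_point:
  assumes a: "a \<in> S" and b: "b \<in> S" and fix_a: "cmp a (ad b) = a" and xy: "(x, y) \<in> \<theta> a"
  shows "(y, y) \<in> \<theta> (ad b)"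
proof -
  have "\<theta> a = \<theta> a O \<theta> (ad b)" using rep_cmp[OF a rep_ad_closed[OF b]] fix_a by simp
  then obtain w where "(w, y) \<in> \<theta> (ad b)" using xy by blast
  then show ?thesis using rep_ad_diagonal[OF b] by metis
qed

lemma common_point_not_complete:
  assumes T: "T \<subseteq> S" "T \<noteq> {}" and inf: "is_inf S meet T z" "is_zero S meet z"
    and p: "\<forall>t\<in>T. p \<in> \<theta> t"
  shows "\<not> complete_rep S meet \<theta>"
proof
  assume "complete_rep S meet \<theta>"
  then have "\<theta> z = (\<Inter>t\<in>T. \<theta> t)" using T inf(1) unfolding complete_rep_def by blast
  then show False using p rep_zero[OF inf(2)] T(2) by blast
qed

text \<open>Such a pair also refutes atomicity: an atom containing it would lie below every
  member of the family, hence below its meet 0.\<close>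
lemma common_point_not_atomic:
  assumes T: "T \<subseteq> S" "T \<noteq> {}" and inf: "is_inf S meet T z" "is_zero S meet z"
    and p: "\<forall>t\<in>T. p \<in> \<theta> t"
  shows "\<not> atomic_rep S meet \<theta>"
proof
  assume "atomic_rep S meet \<theta>"
  then obtain b where atom: "is_atom S meet b" and pb: "p \<in> \<theta> b"
    using T p unfolding atomic_rep_def by blast
  have b: "b \<in> S" using atom unfolding is_atom_def by blast
  have "leq meet b t" if t: "t \<in> T" for t
  proof -
    have t': "t \<in> S" using t T(1) by blast
    have bt: "meet b t \<in> S" using rep_meet_closed[OF b t'] .
    have "\<not> is_zero S meet (meet b t)" using rep_zero rep_meet[OF b t'] pb p t by blast
    moreover have "leq meet (meet b t) b"
    proof -
      have "\<theta> (meet (meet b t) b) = \<theta> (meet b t)" using rep_meet b t' bt by auto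
      then show ?thesis
        using inj_onD[OF rep_inj] rep_meet_closed[OF bt b] bt unfolding leq_def by blast
    qed
    ultimately have "meet b t = b" using atom bt unfolding is_atom_def by blast
    then show ?thesis unfolding leq_def .
  qed
  then have "\<theta> b \<subseteq> \<theta> z" using rep_mono b inf(1) unfolding is_inf_def by blast
  then show False using pb rep_zero[OF inf(2)] by blast
qed

lemma fixed_by_domains_obstruction:
  assumes a: "a \<in> S" "\<not> is_zero S meet a"
    and T: "T \<subseteq> ad ` S" "T \<noteq> {}" "\<forall>t\<in>T. cmp a t = a"
    and inf: "is_inf S meet T z" "is_zero S meet z"
  shows "\<not> atomic_rep S meet \<theta> \<and> \<not> complete_rep S meet \<theta>"
proof -
  have "\<theta> a \<noteq> {}"
  proof
    assume "\<theta> a = {}"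
    then have "\<theta> a = \<theta> z" using rep_zero[OF inf(2)] by simp
    moreover have "z \<in> S" using inf(2) unfolding is_zero_def by blast
    ultimately have "a = z" using inj_onD[OF rep_inj] a(1) by blast
    then show False using a(2) inf(2) by blast
  qed
  then obtain x y where xy: "(x, y) \<in> \<theta> a" by auto
  have common: "\<forall>t\<in>T. (y, y) \<in> \<theta> t"
  proof
    fix t assume "t \<in> T"
    then obtain b where "b \<in> S" "t = ad b" "cmp a t = a" using T by blast
    then show "(y, y) \<in> \<theta> t" using rep_fixed_point[OF a(1) _ _ xy] by blast
  qed
  have "T \<subseteq> S" using T(1) rep_ad_closed by blast
  with T(2) inf common show ?thesis
    using common_point_not_atomic common_point_not_complete by simp
qed

end

lemma leq_Int_iff: "leq (\<inter>) a b \<longleftrightarrow> a \<subseteq> b"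
  unfolding leq_def by blast

lemma is_zero_Int_iff: "{} \<in> F \<Longrightarrow> is_zero F (\<inter>) z \<longleftrightarrow> z = {}"
  unfolding is_zero_def leq_Int_iff by auto

lemma singleton_atom:
  assumes "{} \<in> F" "{p} \<in> F"
  shows "is_atom F (\<inter>) {p}"
  using assms unfolding is_atom_def is_zero_Int_iff[OF assms(1)] leq_Int_iff
  by (auto simp: subset_singleton_iff)

definition admissible :: "pt set \<Rightarrow> bool" where
  "admissible X \<longleftrightarrow> (finite (X - {P}) \<and> Inf \<notin> X) \<or> (finite (- X) \<and> Inf \<in> X)"

lemma Ninf_eq: "Ninf = - {P}"
proof (rule set_eqI)
  fix x show "x \<in> Ninf \<longleftrightarrow> x \<in> - {P}" by (cases x) (auto simp: Ninf_def)
qed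

lemma infinite_range_N: "infinite (range N)"
  using finite_imageD[of N UNIV] by (auto simp: inj_def)

text \<open>The identity on Inf alone is not in Falg; this is what makes the meet of the
  identities on the cofinite sets - {P, N n} equal to {}.\<close>
lemma Inf_not_admissible: "\<not> admissible {Inf}"
proof -
  have "range N \<subseteq> - {Inf}" by auto
  then have "infinite (- {Inf})" using infinite_range_N finite_subset by blast
  then show ?thesis unfolding admissible_def by simp
qed

lemma admissible_Int: "admissible X \<Longrightarrow> admissible Y \<Longrightarrow> admissible (X \<inter> Y)"
  unfolding admissible_def by (auto intro: finite_subset)

lemma admissible_Compl: "admissible X \<Longrightarrow> admissible (- X)"
proof -
  assume "admissible X"
  moreover have "X \<subseteq> (X - {P}) \<union> {P}" by auto
  ultimately show ?thesis unfolding admissible_def by (auto intro: finite_subset)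
qed

lemma admissible_UNIV: "admissible UNIV" and admissible_empty: "admissible {}"
  unfolding admissible_def by auto

lemma Id_on_in_Falg_iff: "Id_on X \<in> Falg \<longleftrightarrow> admissible X"
proof
  assume "Id_on X \<in> Falg"
  moreover have "Id_on X \<noteq> fP" unfolding fP_def Id_on_def by auto
  ultimately obtain A B where AB: "Id_on X = Id_on (A \<union> B)" "A \<subseteq> {P}" "B \<in> Sfam"
    unfolding Falg_def by blast
  have X: "X = A \<union> B" using AB(1) by (metis Domain_Id_on)
  have "B \<subseteq> - {P}" using AB(3) unfolding Sfam_def Ninf_eq by auto
  then have "X - {P} = B" "- X = (- {P} - B) \<union> ({P} - A)" using X AB(2) by auto
  then show "admissible X" using AB(3) X unfolding Sfam_def Ninf_eq admissible_def by auto
next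
  assume adm: "admissible X"
  have "X - {P} \<in> Sfam"
  proof -
    have "- {P} - (X - {P}) \<subseteq> - X" by auto
    then show ?thesis using adm unfolding Sfam_def Ninf_eq admissible_def
      by (auto intro: finite_subset)
  qed
  moreover have "Id_on X = Id_on ((X \<inter> {P}) \<union> (X - {P}))" by (metis Int_Diff_Un)
  ultimately show "Id_on X \<in> Falg" unfolding Falg_def by blast
qed

lemma Falg_cases:
  assumes "f \<in> Falg"
  obtains (Id) X where "admissible X" "f = Id_on X" | (fP) "f = fP"
  using assms Id_on_in_Falg_iff unfolding Falg_def by blast

lemma fP_in_Falg: "fP \<in> Falg" unfolding Falg_def by blast

lemma empty_in_Falg: "{} \<in> Falg"
  using Id_on_in_Falg_iff[of "{}"] admissible_empty by simp

lemma base_Falg: "base Falg = UNIV"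
  using Id_on_in_Falg_iff[of UNIV] admissible_UNIV unfolding base_def by auto

lemma Falg_operation_table:
  "Id_on X O Id_on Y = Id_on (X \<inter> Y)" "Id_on X \<inter> Id_on Y = Id_on (X \<inter> Y)"
  "Id_on X O fP = (if P \<in> X then fP else {})" "fP O Id_on X = (if Inf \<in> X then fP else {})"
  "fP O fP = {}" "Id_on X \<inter> fP = {}" "fP \<inter> Id_on X = {}"
  "antidom UNIV (Id_on X) = Id_on (- X)" "antidom UNIV fP = Id_on (- {P})"
  unfolding fP_def antidom_def Id_on_def by auto

lemma Falg_closed:
  assumes "f \<in> Falg" "g \<in> Falg"
  shows "f O g \<in> Falg \<and> f \<inter> g \<in> Falg"
  by (cases rule: Falg_cases[OF assms(1)]; cases rule: Falg_cases[OF assms(2)])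
    (auto simp: Falg_operation_table Id_on_in_Falg_iff admissible_Int fP_in_Falg empty_in_Falg)

lemma Falg_closed_antidom: "f \<in> Falg \<Longrightarrow> antidom (base Falg) f \<in> Falg"
  by (cases rule: Falg_cases)
    (auto simp: base_Falg Falg_operation_table Id_on_in_Falg_iff admissible_Compl admissible_def)

lemma pfun_alg_Falg: "pfun_alg Falg"
proof -
  have "single_valued f" if "f \<in> Falg" for f
    using that by (cases rule: Falg_cases) (auto simp: single_valued_def fP_def)
  then show ?thesis unfolding pfun_alg_def using Falg_closed Falg_closed_antidom by blast
qed

lemma identity_rep_Falg: "is_rep Falg (\<lambda>f g. f O g) (\<inter>) (antidom (base Falg)) (\<lambda>f. f)"
  unfolding is_rep_def is_alg_def using pfun_alg_Falg Falg_closed Falg_closed_antidom by auto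

text \<open>Falg is atomic: fP is an atom, and every nonempty identity contains the
  identity on a single point other than Inf, which is an atom.\<close>
lemma atomic_Falg: "atomic_alg Falg (\<inter>)"
  unfolding atomic_alg_def is_zero_Int_iff[OF empty_in_Falg] leq_Int_iff
proof (intro ballI impI)
  fix a assume a: "a \<in> Falg" "a \<noteq> {}"
  show "\<exists>b. is_atom Falg (\<inter>) b \<and> b \<subseteq> a"
    using a(1)
  proof (cases rule: Falg_cases)
    case fP
    then show ?thesis
      using singleton_atom[OF empty_in_Falg] fP_in_Falg unfolding fP_def by blast
  next
    case (Id X)
    then have "X \<noteq> {Inf}" using Inf_not_admissible by blast
    then obtain z where z: "z \<in> X" "z \<noteq> Inf" using Id a(2) by auto
    then have "admissible {z}" unfolding admissible_def by auto
    then have "is_atom Falg (\<inter>) {(z, z)}"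
      using singleton_atom[OF empty_in_Falg] Id_on_in_Falg_iff[of "{z}"] by (simp add: Id_on_def)
    moreover have "{(z, z)} \<subseteq> a" using z Id by auto
    ultimately show ?thesis by blast
  qed
qed

definition cofinite_ids :: "(pt \<times> pt) set set" where
  "cofinite_ids = range (\<lambda>n. Id_on (- {P, N n}))"

lemma cofinite_ids_antidomains: "cofinite_ids \<subseteq> antidom (base Falg) ` Falg"
proof
  fix t assume "t \<in> cofinite_ids"
  then obtain n where "t = Id_on (- {P, N n})" unfolding cofinite_ids_def by blast
  then have t: "t = antidom UNIV (Id_on {P, N n})" by (simp add: Falg_operation_table)
  have "Id_on {P, N n} \<in> Falg" unfolding Id_on_in_Falg_iff admissible_def by auto
  then show "t \<in> antidom (base Falg) ` Falg" using t base_Falg by simp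
qed

lemma fP_fixed_by_cofinite_ids: "\<forall>t\<in>cofinite_ids. fP O t = fP"
  unfolding cofinite_ids_def fP_def by auto

text \<open>The only element of Falg below every member of the family is {}:
  an admissible set avoiding P and every N n is empty or {Inf}, and {Inf} is
  not admissible.\<close>
lemma below_cofinite_ids_empty:
  assumes c: "c \<in> Falg" and below: "\<forall>t\<in>cofinite_ids. c \<subseteq> t"
  shows "c = {}"
  using c
proof (cases rule: Falg_cases)
  case fP
  then show ?thesis using below unfolding cofinite_ids_def fP_def Id_on_def by auto
next
  case (Id X)
  have "X \<subseteq> - {P, N n}" for n using below Id unfolding cofinite_ids_def by auto
  then have "X \<subseteq> {Inf}"
  proof (intro subsetI)
    fix x assume "\<And>n. X \<subseteq> - {P, N n}" "x \<in> X"
    then show "x \<in> {Inf}" by (cases x) auto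
  qed
  then have "X = {}" using Id Inf_not_admissible by (auto simp: subset_singleton_iff)
  then show ?thesis using Id by simp
qed

lemma inf_cofinite_ids: "is_inf Falg (\<inter>) cofinite_ids {}"
  unfolding is_inf_def leq_Int_iff using empty_in_Falg below_cofinite_ids_empty by blast

theorem mainTheorem11:
  shows "pfun_alg Falg
    \<and> is_rep Falg (\<lambda>f g. f O g) (\<inter>) (antidom (base Falg)) (\<lambda>f. f)
    \<and> atomic_alg Falg (\<inter>)
    \<and> (\<forall>\<theta> :: (pt \<times> pt) set \<Rightarrow> ('c \<times> 'c) set.
          is_rep Falg (\<lambda>f g. f O g) (\<inter>) (antidom (base Falg)) \<theta> \<longrightarrow>
          \<not> atomic_rep Falg (\<inter>) \<theta> \<and> \<not> complete_rep Falg (\<inter>) \<theta>)"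
proof (intro conjI allI impI)
  fix \<theta> :: "(pt \<times> pt) set \<Rightarrow> ('c \<times> 'c) set"
  assume rep: "is_rep Falg (\<lambda>f g. f O g) (\<inter>) (antidom (base Falg)) \<theta>"
  have fP_nonzero: "\<not> is_zero Falg (\<inter>) fP"
    unfolding is_zero_Int_iff[OF empty_in_Falg] fP_def by simp
  have empty_zero: "is_zero Falg (\<inter>) {}"
    unfolding is_zero_Int_iff[OF empty_in_Falg] ..
  have "cofinite_ids \<noteq> {}" unfolding cofinite_ids_def by simp
  from fixed_by_domains_obstruction[OF rep fP_in_Falg fP_nonzero cofinite_ids_antidomains this
      fP_fixed_by_cofinite_ids inf_cofinite_ids empty_zero]
  show "\<not> atomic_rep Falg (\<inter>) \<theta>" "\<not> complete_rep Falg (\<inter>) \<theta>" by simp_all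
qed (fact pfun_alg_Falg identity_rep_Falg atomic_Falg)+

end
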